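(* Let $m\ge1$ and $L=\mathcal{R}^*$. For $a\in\mathcal{R}$ the Lee weight of $ev(a)=(Tr(ax))_{x\in \mathcal{R}^*}$ is: (a) $0$ if $a=0$; (b) $2\cdot3^{3m}$ if $a=(u-1)^2a_3$ with $a_3\in\mathbb{F}_{3^m}^*$; (c) $2(3^{3m}-3^{2m})$ if $a\in\mathcal{R}\setminus\langle (u-1)^2\rangle$.
   Context: Let $R=\mathbb{F}_3[u]/(u^3-1)$ and $\mathcal{R}=\mathbb{F}_{3^m}[u]/(u^3-1)=\mathbb{F}_{3^m}+u\mathbb{F}_{3^m}+u^2\mathbb{F}_{3^m}$. Every element of $\mathcal{R}$ is uniquely $x_1+x_2(u-1)+x_3(u-1)^2$ with $x_i\in\mathbb{F}_{3^m}$; $\mathcal{R}^*$ (the units) consists of those with $x_1\neq0$. $\langle (u-1)^2\rangle=\{(u-1)^2a_3:a_3\in\mathbb{F}_{3^m}\}$. $Tr:\mathcal{R}\to R$ is $Tr(a+ub+u^2c)=tr(a)+u\,tr(b)+u^2tr(c)$, with $tr$ the absolute trace $\mathbb{F}_{3^m}\to\mathbb{F}_3$. The Gray map $\phi:R\to\mathbb{F}_3^3$ is $\phi(a'+ub'+u^2c')=(a',b',c')$, extended coordinatewise to $R^n\to\mathbb{F}_3^{3n}$; the Lee weight $w_L(v)$ of $v\in R^n$ is the Hamming weight of $\phi(v)$. *)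

theory Defs
  imports Main
begin

text \<open>The ring \<R> = F_{3^m}[u]/(u^3-1) is represented by triples (a0,a1,a2)
  standing for a0 + a1 u + a2 u^2, where the base field F_{3^m} is an arbitrary
  finite field type 'k with CARD('k) = 3^m.\<close>

type_synonym 'k tri = "'k \<times> 'k \<times> 'k"

text \<open>Multiplication modulo u^3 = 1.\<close>
definition rmult :: "'k::field tri \<Rightarrow> 'k tri \<Rightarrow> 'k tri" where
  "rmult a b = (case a of (a0,a1,a2) \<Rightarrow> case b of (b0,b1,b2) \<Rightarrow>
     (a0*b0 + a1*b2 + a2*b1, a0*b1 + a1*b0 + a2*b2, a0*b2 + a1*b1 + a2*b0))"

definition rone :: "'k::field tri" where "rone = (1,0,0)"

definition runits :: "'k::field tri set" where
  "runits = {a. \<exists>b. rmult a b = rone}"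

definition u_minus_1 :: "'k::field tri" where "u_minus_1 = (-1, 1, 0)"

definition u_minus_1_sq :: "'k::field tri" where "u_minus_1_sq = rmult u_minus_1 u_minus_1"

definition ideal_u1sq :: "'k::field tri set" where
  "ideal_u1sq = {rmult u_minus_1_sq r | r. True}"

text \<open>Absolute trace F_{3^m} \<rightarrow> F_3 (values lie in the prime field of 'k).\<close>
definition abs_tr :: "nat \<Rightarrow> 'k::field \<Rightarrow> 'k" where
  "abs_tr m x = (\<Sum>i<m. x ^ (3 ^ i))"

definition Tr :: "nat \<Rightarrow> 'k::field tri \<Rightarrow> 'k tri" where
  "Tr m a = (case a of (a0,a1,a2) \<Rightarrow> (abs_tr m a0, abs_tr m a1, abs_tr m a2))"

text \<open>Lee weight of a single element of R = Hamming weight of its Gray image (a',b',c').\<close>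
definition lee_wt1 :: "'k::field tri \<Rightarrow> nat" where
  "lee_wt1 a = (case a of (a0,a1,a2) \<Rightarrow>
     (if a0 = 0 then 0 else 1) + (if a1 = 0 then 0 else 1) + (if a2 = 0 then 0 else 1))"

definition lee_ev :: "nat \<Rightarrow> 'k::{field,finite} tri \<Rightarrow> nat" where
  "lee_ev m a = (\<Sum>x\<in>runits. lee_wt1 (Tr m (rmult a x)))"

end

theory Submission
  imports
    Defs
    "HOL-Number_Theory.Residues"
    "HOL-Computational_Algebra.Polynomial"
    "HOL-Library.Product_Plus"
    "HOL-Library.Cardinality"
begin

text \<open>Write \<open>q = 3^m\<close>. Each coordinate of \<open>a x\<close> is a linear form \<open>dotp c x\<close> in \<open>x\<close>, with \<open>c\<close> a
  permutation of the coefficients of \<open>a\<close>, so the Lee weight of \<open>ev(a)\<close> is a sum of three counts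
  of units \<open>x\<close> with \<open>tr (dotp c x) \<noteq> 0\<close>. The units are the elements with nonzero augmentation
  \<open>x0 + x1 + x2\<close>, because in characteristic 3 the norm of \<open>x\<close> is the cube of its augmentation.
  If \<open>c\<close> is not constant, \<open>x \<mapsto> (aug x, dotp c x)\<close> is an additive surjection onto \<open>k\<^sup>2\<close>, all of
  whose fibres have \<open>q\<close> elements; if \<open>c = (l, l, l)\<close> then \<open>dotp c x = l * aug x\<close>. Either way the
  count is a product of \<open>q\<close>'s and \<open>|{t. tr t \<noteq> 0}|\<close>, and the latter is \<open>2 * 3^(m-1)\<close>: the trace is
  additive, not identically zero and takes its values in \<open>{0, 1, -1}\<close>, so it takes each of them
  equally often.\<close>

lemma card_vimage_additive:
  fixes f :: "'a::{ab_group_add,finite} \<Rightarrow> 'b::ab_group_add"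
  assumes add: "\<And>x y. f (x + y) = f x + f y" and S: "S \<subseteq> range f"
  shows "card (f -` S) = card S * card (f -` {0})"
proof -
  have fiber: "card (f -` {s}) = card (f -` {0})" if "s \<in> S" for s
  proof -
    obtain x0 where x0: "f x0 = s" using S \<open>s \<in> S\<close> by blast
    have f0: "f 0 = 0" using add[of 0 0] by simp
    have diff: "f (x - x0) = f x - s" for x using add[of "x - x0" x0] x0 by (simp add: algebra_simps)
    have "f -` {s} = (+) x0 ` (f -` {0})"
    proof (intro Set.set_eqI iffI)
      fix x assume "x \<in> f -` {s}"
      then have "x - x0 \<in> f -` {0}" by (simp add: diff)
      then show "x \<in> (+) x0 ` (f -` {0})" by (rule rev_image_eqI) simp
    qed (use add x0 f0 in auto)
    then show ?thesis by (simp add: card_image)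
  qed
  have "f -` S = (\<Union>s\<in>S. f -` {s})" by auto
  then have "card (f -` S) = (\<Sum>s\<in>S. card (f -` {s}))"
    by (simp add: card_UN_disjoint finite_subset[OF S] disjoint_iff)
  also have "\<dots> = card S * card (f -` {0})" by (simp add: fiber)
  finally show ?thesis .
qed

lemma card_vimage_surj_additive:
  fixes f :: "'a::{ab_group_add,finite} \<Rightarrow> 'b::{ab_group_add,finite}"
  assumes add: "\<And>x y. f (x + y) = f x + f y" and "surj f"
  shows "card (f -` S) * CARD('b) = card S * CARD('a)"
proof -
  have into_range: "T \<subseteq> range f" for T using \<open>surj f\<close> by simp
  have "CARD('a) = CARD('b) * card (f -` {0})"
    using card_vimage_additive[OF add into_range[of UNIV]] by simp
  then show ?thesis
    using card_vimage_additive[OF add into_range[of S]] by simp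
qed

text \<open>The augmentation \<open>u \<mapsto> 1\<close>, i.e. the coefficient \<open>x\<^sub>1\<close> in the \<open>(u-1)\<close>-adic expansion.\<close>
definition aug :: "'k::comm_ring_1 tri \<Rightarrow> 'k" where
  "aug x = (case x of (x0, x1, x2) \<Rightarrow> x0 + x1 + x2)"

definition dotp :: "'k::comm_ring_1 tri \<Rightarrow> 'k tri \<Rightarrow> 'k" where
  "dotp c x = (case c of (c0, c1, c2) \<Rightarrow> case x of (x0, x1, x2) \<Rightarrow> c0 * x0 + c1 * x1 + c2 * x2)"

lemma aug_add: "aug (x + y) = aug x + aug (y :: 'k::comm_ring_1 tri)"
  by (cases x; cases y) (simp add: aug_def)

lemma dotp_add: "dotp c (x + y) = dotp c x + dotp c (y :: 'k::comm_ring_1 tri)"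
  by (cases c; cases x; cases y) (simp add: dotp_def algebra_simps)

lemma dotp_const: "dotp (l, l, l) x = l * aug (x :: 'k::comm_ring_1 tri)"
  by (cases x) (simp add: dotp_def aug_def algebra_simps)

lemma aug_rmult: "aug (rmult a b) = aug a * aug (b :: 'k::field tri)"
  by (cases a; cases b) (simp add: aug_def rmult_def algebra_simps)

lemma rmult_eq_dotp:
  "rmult (a0, a1, a2) x = (dotp (a0, a2, a1) x, dotp (a1, a0, a2) x, dotp (a2, a1, a0) (x :: 'k::field tri))"
  by (cases x) (simp add: rmult_def dotp_def algebra_simps)

lemma rmult_adjugate:
  "rmult (a0, a1, a2) (a0*a0 - a1*a2, a2*a2 - a0*a1, a1*a1 - a0*a2)
     = (a0^3 + a1^3 + a2^3 - 3*a0*a1*a2, 0, 0 :: 'k::field)"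
  by (simp add: rmult_def algebra_simps power3_eq_cube)

lemma rmult_scale_right:
  "rmult a (b0 * d, b1 * d, b2 * d) = (case rmult a (b0, b1, b2) of (p, q, r) \<Rightarrow> (p * d, q * d, r * (d :: 'k::field)))"
  by (cases a) (simp add: rmult_def algebra_simps)

lemma in_runitsI:
  assumes "rmult a b = (d, 0, 0)" and "d \<noteq> 0"
  shows "a \<in> runits"
proof -
  obtain b0 b1 b2 where b: "b = (b0, b1, b2)" by (cases b)
  have "rmult a (b0 * inverse d, b1 * inverse d, b2 * inverse d) = rone"
    using assms by (simp add: rmult_scale_right b rone_def)
  then show ?thesis unfolding runits_def by blast
qed

lemma CHAR_eq_3:
  assumes "CARD('k::{field,finite}) = 3 ^ m"
  shows "CHAR('k) = 3"
proof -
  have "prime CHAR('k)"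
    by (intro prime_CHAR_semidom finite_imp_CHAR_pos) simp
  moreover have "CHAR('k) dvd 3 ^ m"
    using CHAR_dvd_CARD[where 'a='k] assms by simp
  ultimately have "CHAR('k) dvd 3" by (rule prime_dvd_power)
  moreover have "prime (3::nat)" by (simp add: prime_iff)
  ultimately show ?thesis using \<open>prime CHAR('k)\<close> by (simp add: primes_dvd_imp_eq)
qed

lemma add_cube_char_3:
  assumes "CHAR('a::comm_semiring_1) = 3"
  shows "(x + y :: 'a) ^ 3 = x ^ 3 + y ^ 3"
  using freshmans_dream[where 'a='a, OF _ assms[symmetric]] assms by (simp add: prime_iff)

lemma runits_char_3:
  assumes "CHAR('k::field) = 3"
  shows "(runits :: 'k tri set) = {x. aug x \<noteq> 0}"
proof (intro Set.set_eqI iffI)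
  fix x :: "'k tri"
  assume "x \<in> runits"
  then obtain b where "rmult x b = rone" by (auto simp: runits_def)
  then have "aug (rmult x b) = 1" by (simp add: aug_def rone_def)
  then have "aug x * aug b = 1" by (simp add: aug_rmult)
  then show "x \<in> {x. aug x \<noteq> 0}" by auto
next
  fix x :: "'k tri"
  assume "x \<in> {x. aug x \<noteq> 0}"
  moreover obtain x0 x1 x2 where x: "x = (x0, x1, x2)" by (cases x)
  ultimately have "(x0 + x1 + x2) ^ 3 \<noteq> 0" by (simp add: aug_def)
  moreover have "(x0 + x1 + x2) ^ 3 = x0^3 + x1^3 + x2^3 - 3*x0*x1*x2"
  proof -
    have three: "(3::'k) = 0" using of_nat_CHAR[where 'a='k] assms by simp
    show ?thesis by (simp only: add_cube_char_3[OF assms] three mult_zero_left diff_zero)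
  qed
  ultimately show "x \<in> runits"
    unfolding x by (intro in_runitsI[OF rmult_adjugate]) simp
qed

lemma surj_aug_dotp:
  fixes c0 c1 c2 :: "'k::field"
  assumes "\<not> (c0 = c1 \<and> c1 = c2)"
  shows "surj (\<lambda>x. (aug x, dotp (c0, c1, c2) x))"
proof -
  have preimage: "\<exists>x. aug x = s \<and> dotp (c0, c1, c2) x = t" for s t
  proof (cases "c1 = c0")
    case False
    define y where "y = (t - c0 * s) / (c1 - c0)"
    have "c0 * (s - y) + c1 * y = c0 * s + (c1 - c0) * y" by (simp add: algebra_simps)
    also have "\<dots> = t" using False by (simp add: y_def)
    finally show ?thesis by (intro exI[of _ "(s - y, y, 0)"]) (simp add: aug_def dotp_def)
  next
    case True
    with assms have "c2 \<noteq> c0" by auto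
    define y where "y = (t - c0 * s) / (c2 - c0)"
    have "c0 * (s - y) + c2 * y = c0 * s + (c2 - c0) * y" by (simp add: algebra_simps)
    also have "\<dots> = t" using \<open>c2 \<noteq> c0\<close> by (simp add: y_def)
    finally show ?thesis by (intro exI[of _ "(s - y, 0, y)"]) (simp add: aug_def dotp_def)
  qed
  show ?thesis
  proof (unfold surj_def, intro allI)
    fix st :: "'k \<times> 'k"
    obtain s t where "st = (s, t)" by (cases st)
    with preimage[of s t] show "\<exists>x. st = (aug x, dotp (c0, c1, c2) x)" by auto
  qed
qed

lemma card_aug_dotp_nonconst:
  fixes c0 c1 c2 :: "'k::{field,finite}" and T :: "'k set"
  assumes "\<not> (c0 = c1 \<and> c1 = c2)"
  shows "card {x. aug x \<noteq> 0 \<and> dotp (c0, c1, c2) x \<in> T} = (CARD('k) - 1) * card T * CARD('k)"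
proof -
  let ?f = "\<lambda>x. (aug x, dotp (c0, c1, c2) x)"
  have "{x. aug x \<noteq> 0 \<and> dotp (c0, c1, c2) x \<in> T} = ?f -` ((- {0}) \<times> T)" by auto
  moreover have "card (?f -` ((- {0}) \<times> T)) * CARD('k \<times> 'k) = card ((- {0::'k}) \<times> T) * CARD('k tri)"
    by (rule card_vimage_surj_additive) (simp_all add: aug_add dotp_add surj_aug_dotp[OF assms])
  moreover have "card (- {0::'k}) = CARD('k) - 1"
    by (simp add: Compl_eq_Diff_UNIV card_Diff_singleton)
  ultimately show ?thesis by (simp add: card_cartesian_product)
qed

lemma card_aug_dotp_const:
  fixes l :: "'k::{field,finite}" and T :: "'k set"
  assumes "l \<noteq> 0" and "0 \<notin> T"
  shows "card {x. aug x \<noteq> 0 \<and> dotp (l, l, l) x \<in> T} = card T * CARD('k) ^ 2"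
proof -
  let ?f = "\<lambda>x :: 'k tri. l * aug x"
  have "{x. aug x \<noteq> 0 \<and> dotp (l, l, l) x \<in> T} = ?f -` T"
    using assms(2) by (auto simp: dotp_const)
  moreover have "surj ?f"
    using assms(1) by (intro surjI[of _ "\<lambda>t. (t / l, 0, 0)"]) (simp add: aug_def)
  then have "card (?f -` T) * CARD('k) = card T * CARD('k tri)"
    using card_vimage_surj_additive[where f = ?f] by (simp add: aug_add distrib_left)
  ultimately show ?thesis by (simp add: power2_eq_square)
qed

text \<open>The library's \<open>finite_field_power_card_eq_same\<close> needs the class \<open>finite_field\<close>, which
  cannot be assumed of a type variable of sort \<open>{field, finite}\<close>.\<close>
lemma power_card_eq_self:
  fixes x :: "'k::{field,finite}"
  shows "x ^ CARD('k) = x"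
proof (cases "x = 0")
  case False
  let ?U = "UNIV - {0::'k}"
  have "(\<Prod>y\<in>?U. x * y) = (\<Prod>y\<in>?U. y)"
    by (rule prod.reindex_bij_witness[of _ "\<lambda>y. y / x" "\<lambda>y. x * y"]) (use False in auto)
  then have "x ^ card ?U = 1" by (simp add: prod.distrib)
  moreover have "CARD('k) = Suc (card ?U)"
    by (simp add: card_Diff_singleton finite_UNIV_card_ge_0)
  ultimately show ?thesis by (metis power_Suc mult_1_right)
qed (simp add: finite_UNIV_card_ge_0)

lemma abs_tr_zero [simp]: "abs_tr m (0 :: 'k::field) = 0"
  by (simp add: abs_tr_def power_0_left)

lemma abs_tr_uminus: "abs_tr m (- x) = - abs_tr m (x :: 'k::field)"
  by (simp add: abs_tr_def sum_negf)

lemma abs_tr_add: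
  assumes "CHAR('k::field) = 3"
  shows "abs_tr m (x + y) = abs_tr m x + abs_tr m (y :: 'k)"
  unfolding abs_tr_def sum.distrib[symmetric]
  using freshmans_dream'[where 'a='k] assms by simp

lemma abs_tr_cube:
  fixes x :: "'k::{field,finite}"
  assumes card: "CARD('k) = 3 ^ m" and "m \<ge> 1"
  shows "abs_tr m x ^ 3 = abs_tr m x"
proof -
  obtain n where m: "m = Suc n" using \<open>m \<ge> 1\<close> by (cases m) auto
  have "CHAR('k) = 3" by (rule CHAR_eq_3[OF card])
  then have "abs_tr m x ^ 3 = (\<Sum>i<m. (x ^ 3 ^ i) ^ 3)"
    unfolding abs_tr_def by (intro freshmans_dream_sum) simp_all
  also have "\<dots> = (\<Sum>i<m. x ^ 3 ^ Suc i)"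
    by (simp only: power_mult[symmetric] power_Suc2)
  also have "\<dots> = (\<Sum>i<n. x ^ 3 ^ Suc i) + x ^ CARD('k)"
    by (simp only: m card sum.lessThan_Suc)
  also have "\<dots> = abs_tr m x"
    unfolding power_card_eq_self abs_tr_def m sum.lessThan_Suc_shift by simp
  finally show ?thesis .
qed

lemma abs_tr_not_identically_zero:
  assumes card: "CARD('k::{field,finite}) = 3 ^ m" and "m \<ge> 1"
  shows "\<exists>z::'k. abs_tr m z \<noteq> 0"
proof (rule ccontr)
  assume all_zero: "\<not> ?thesis"
  define p :: "'k poly" where "p = (\<Sum>i<m. monom 1 (3 ^ i))"
  have "coeff p 1 = (\<Sum>i<m. if i = 0 then 1 else 0)"
    by (simp add: p_def coeff_sum coeff_monom)
  then have "coeff p 1 = 1" using \<open>m \<ge> 1\<close> by simp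
  then have "p \<noteq> 0" by auto
  then have "card {z. poly p z = 0} \<le> degree p" by (rule card_poly_roots_bound)
  also have "degree p \<le> 3 ^ (m - 1)"
    unfolding p_def by (rule degree_sum_le) (auto intro: order.trans[OF degree_monom_le] power_increasing)
  also have "{z. poly p z = 0} = UNIV"
    using all_zero by (simp add: p_def poly_sum poly_monom abs_tr_def)
  finally have "CARD('k) \<le> 3 ^ (m - 1)" by simp
  moreover have "(3::nat) ^ (m - 1) < 3 ^ m"
    using \<open>m \<ge> 1\<close> by (intro power_strict_increasing) auto
  ultimately show False using card by linarith
qed

lemma abs_tr_values:
  assumes "CARD('k::{field,finite}) = 3 ^ m" and "m \<ge> 1"
  shows "abs_tr m (x :: 'k) \<in> {0, 1, -1}"
proof -
  let ?t = "abs_tr m x"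
  have "?t * (?t - 1) * (?t + 1) = 0"
    using abs_tr_cube[OF assms, of x] by (simp add: algebra_simps power3_eq_cube)
  then show ?thesis by (auto simp: eq_neg_iff_add_eq_0)
qed

lemma range_abs_tr:
  assumes "CARD('k::{field,finite}) = 3 ^ m" and "m \<ge> 1"
  shows "range (abs_tr m :: 'k \<Rightarrow> 'k) = {0, 1, -1}"
proof -
  obtain z :: 'k where "abs_tr m z \<noteq> 0" using abs_tr_not_identically_zero[OF assms] by blast
  then have "{abs_tr m z, abs_tr m (- z)} = {1, -1}"
    using abs_tr_values[OF assms, of z] by (auto simp: abs_tr_uminus)
  then have "{0, 1, -1} \<subseteq> range (abs_tr m :: 'k \<Rightarrow> 'k)"
    by (metis abs_tr_zero empty_subsetI insert_subset rangeI)
  then show ?thesis using abs_tr_values[OF assms] by blast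
qed

lemma card_abs_tr_ne_0:
  assumes card: "CARD('k::{field,finite}) = 3 ^ m" and "m \<ge> 1"
  shows "card {x :: 'k. abs_tr m x \<noteq> 0} = 2 * 3 ^ (m - 1)"
proof -
  have "CHAR('k) = 3" by (rule CHAR_eq_3[OF card])
  then have add: "abs_tr m (x + y) = abs_tr m x + abs_tr m (y :: 'k)" for x y
    by (rule abs_tr_add)
  have "(1::'k) \<noteq> -1"
  proof
    assume "(1::'k) = -1"
    then have "1 + 1 = (0::'k)" by (simp add: eq_neg_iff_add_eq_0)
    moreover have "(3::'k) = 1 + (1 + 1)" by simp
    ultimately have "(3::'k) = 1" by simp
    moreover have "(3::'k) = 0" using of_nat_CHAR[where 'a='k] \<open>CHAR('k) = 3\<close> by simp
    ultimately show False by simp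
  qed
  have "CARD('k) = card (range (abs_tr m :: 'k \<Rightarrow> 'k)) * card (abs_tr m -` {0 :: 'k})"
    using card_vimage_additive[OF add, of "range (abs_tr m)"] by (simp add: vimage_def)
  also have "card (range (abs_tr m :: 'k \<Rightarrow> 'k)) = 3"
    using range_abs_tr[OF assms] \<open>(1::'k) \<noteq> -1\<close> by simp
  moreover have "{x :: 'k. abs_tr m x \<noteq> 0} = abs_tr m -` {1, -1}"
    using abs_tr_values[OF assms] by fastforce
  then have "card {x :: 'k. abs_tr m x \<noteq> 0} = 2 * card (abs_tr m -` {0 :: 'k})"
    using card_vimage_additive[OF add, of "{1, -1}"] range_abs_tr[OF assms] \<open>(1::'k) \<noteq> -1\<close>
    by simp
  ultimately show ?thesis using card \<open>m \<ge> 1\<close> by (cases m) auto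
qed

definition tr_count :: "nat \<Rightarrow> 'k::{field,finite} tri \<Rightarrow> nat" where
  "tr_count m c = card {x \<in> runits. abs_tr m (dotp c x) \<noteq> 0}"

lemma lee_ev_eq_tr_count:
  "lee_ev m (a0, a1, a2 :: 'k::{field,finite}) = tr_count m (a0, a2, a1) + tr_count m (a1, a0, a2) + tr_count m (a2, a1, a0)"
proof -
  have "lee_wt1 (Tr m (p, q, r)) = of_bool (abs_tr m p \<noteq> 0) + of_bool (abs_tr m q \<noteq> 0) + of_bool (abs_tr m r \<noteq> 0)"
    for p q r :: "'k::{field,finite}"
    by (simp add: Tr_def lee_wt1_def)
  then show ?thesis
    by (simp add: lee_ev_def rmult_eq_dotp sum.distrib tr_count_def Int_def)
qed

lemma tr_count_nonconst:
  assumes card: "CARD('k::{field,finite}) = 3 ^ m" and "m \<ge> 1" and "\<not> (c0 = c1 \<and> c1 = c2)"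
  shows "tr_count m (c0, c1, c2 :: 'k) = (3 ^ m - 1) * (2 * 3 ^ (m - 1)) * 3 ^ m"
  using card_aug_dotp_nonconst[OF assms(3), of "{t. abs_tr m t \<noteq> 0}"] card_abs_tr_ne_0[OF card \<open>m \<ge> 1\<close>]
  by (simp add: tr_count_def runits_char_3[OF CHAR_eq_3[OF card]] card)

lemma tr_count_const:
  assumes card: "CARD('k::{field,finite}) = 3 ^ m" and "m \<ge> 1" and "l \<noteq> 0"
  shows "tr_count m (l, l, l :: 'k) = 2 * 3 ^ (m - 1) * (3 ^ m) ^ 2"
  using card_aug_dotp_const[OF assms(3), of "{t. abs_tr m t \<noteq> 0}"] card_abs_tr_ne_0[OF card \<open>m \<ge> 1\<close>]
  by (simp add: tr_count_def runits_char_3[OF CHAR_eq_3[OF card]] card)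

lemma lee_ev_const:
  assumes card: "CARD('k::{field,finite}) = 3 ^ m" and "m \<ge> 1" and "l \<noteq> 0"
  shows "lee_ev m (l, l, l :: 'k) = 2 * 3 ^ (3 * m)"
proof -
  define q r :: nat where "q = 3 ^ m" and "r = 3 ^ (m - 1)"
  have q: "3 * r = q" using \<open>m \<ge> 1\<close> by (cases m) (auto simp: q_def r_def)
  have "lee_ev m (l, l, l) = 3 * (2 * r * q ^ 2)"
    using tr_count_const[OF assms] by (simp add: lee_ev_eq_tr_count q_def r_def)
  also have "\<dots> = 2 * q ^ 3"
    using q by (simp add: power3_eq_cube power2_eq_square mult.assoc[symmetric])
  finally show ?thesis by (simp add: q_def power_mult[symmetric] mult.commute)
qed

lemma lee_ev_nonconst:
  assumes card: "CARD('k::{field,finite}) = 3 ^ m" and "m \<ge> 1" and nonconst: "\<not> (a0 = a1 \<and> a1 = a2)"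
  shows "lee_ev m (a0, a1, a2 :: 'k) = 2 * (3 ^ (3 * m) - 3 ^ (2 * m))"
proof -
  define q r :: nat where "q = 3 ^ m" and "r = 3 ^ (m - 1)"
  have q: "3 * r = q" using \<open>m \<ge> 1\<close> by (cases m) (auto simp: q_def r_def)
  have "tr_count m (a0, a2, a1) = (q - 1) * (2 * r) * q"
    "tr_count m (a1, a0, a2) = (q - 1) * (2 * r) * q"
    "tr_count m (a2, a1, a0) = (q - 1) * (2 * r) * q"
    by (rule tr_count_nonconst[OF card \<open>m \<ge> 1\<close>, folded q_def r_def]; use nonconst in auto)+
  then have "lee_ev m (a0, a1, a2) = 3 * ((q - 1) * (2 * r) * q)"
    by (simp add: lee_ev_eq_tr_count)
  also have "\<dots> = 2 * ((q - 1) * (3 * r) * q)"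
    by (simp only: mult_ac)
  also have "\<dots> = 2 * (q ^ 3 - q ^ 2)"
    using q by (simp add: power3_eq_cube power2_eq_square diff_mult_distrib)
  finally show ?thesis by (simp add: q_def power_mult[symmetric] mult.commute)
qed

lemma rmult_u_minus_1_sq:
  assumes "CHAR('k::field) = 3"
  shows "rmult u_minus_1_sq (b, 0, 0) = (b, b, b :: 'k)"
proof -
  have "(-2::'k) = 1"
    using of_nat_CHAR[where 'a='k] assms by (simp add: eq_neg_iff_add_eq_0)
  then show ?thesis by (simp add: u_minus_1_sq_def u_minus_1_def rmult_def)
qed

theorem theorem5p5:
  fixes a :: "'k::{field,finite} tri" and m :: nat
  assumes "m \<ge> 1" and "card (UNIV :: 'k set) = 3 ^ m"
  shows "(a = (0,0,0) \<longrightarrow> lee_ev m a = 0)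
    \<and> (\<forall>a3::'k. a3 \<noteq> 0 \<and> a = rmult u_minus_1_sq (a3,0,0) \<longrightarrow> lee_ev m a = 2 * 3 ^ (3*m))
    \<and> (a \<notin> ideal_u1sq \<longrightarrow> lee_ev m a = 2 * (3 ^ (3*m) - 3 ^ (2*m)))"
proof (intro conjI impI allI)
  note m = assms(1) and card = assms(2)
  have const: "rmult u_minus_1_sq (b, 0, 0) = (b, b, b)" for b :: 'k
    by (rule rmult_u_minus_1_sq[OF CHAR_eq_3[OF card]])
  show "lee_ev m a = 0" if "a = (0, 0, 0)"
    using that by (simp add: lee_ev_def rmult_def Tr_def lee_wt1_def)
  show "lee_ev m a = 2 * 3 ^ (3 * m)" if "a3 \<noteq> 0 \<and> a = rmult u_minus_1_sq (a3, 0, 0)" for a3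
    using that lee_ev_const[OF card m] by (simp add: const)
  show "lee_ev m a = 2 * (3 ^ (3 * m) - 3 ^ (2 * m))" if "a \<notin> ideal_u1sq"
  proof -
    obtain a0 a1 a2 where a: "a = (a0, a1, a2)" by (cases a)
    have "\<not> (a0 = a1 \<and> a1 = a2)"
    proof
      assume "a0 = a1 \<and> a1 = a2"
      then have "a = rmult u_minus_1_sq (a0, 0, 0)" by (simp add: a const)
      then show False using that by (auto simp: ideal_u1sq_def)
    qed
    then show ?thesis using lee_ev_nonconst[OF card m] by (simp add: a)
  qed
qed

end
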